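(* Let $(w_{n,k})_{n,k\ge0}$ be an array of complex numbers such that, for some constants $L,M$: $w_{n,k}=0$ for $k>n$; $\lim_{n\to\infty}w_{n,k}=1$ for every $k$; $|w_{n,k}|\le M$ for all $n,k$; and $|w_{n,k}-w_{n,k+1}|\le L/n$ for all $n\ge1,k\ge0$. Let $f(z)=\sum_{k\ge0}a_kz^k$ be holomorphic on $\mathbb D$ and $p_n(z):=\sum_{k=0}^n w_{n,k}a_kz^k$. Let $\zeta\in\overline{\mathbb D}$ with $\mathcal D_\zeta(f)<\infty$. Then $\lim_{n\to\infty}\mathcal D_\zeta(f-p_n)=0$ and $\sup_{n\ge1}\mathcal D_\zeta(f-p_n)\le C^2\mathcal D_\zeta(f)$, where $C$ is a constant depending only on the array $(w_{n,k})$ (not on $f$ or $\zeta$).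
   Context: $\mathbb D$ is the open unit disk, $\mathrm{Hol}(\mathbb D)$ the holomorphic functions on $\mathbb D$, and $H^2$ the Hardy space with $\|\sum b_kz^k\|_{H^2}^2=\sum|b_k|^2$. For $\zeta\in\overline{\mathbb D}$, $\mathcal D_\zeta$ is the set of $f\in\mathrm{Hol}(\mathbb D)$ of the form $f(z)=a+(z-\zeta)g(z)$ with $g\in H^2$, $a\in\mathbb C$; for such $f$ set $\mathcal D_\zeta(f):=\|g\|_{H^2}^2$, and set $\mathcal D_\zeta(f):=\infty$ if $f\notin\mathcal D_\zeta$. *)

theory Defs
  imports "HOL-Analysis.Analysis"
begin

definition taylor_coeff :: "(complex \<Rightarrow> complex) \<Rightarrow> nat \<Rightarrow> complex" where
  "taylor_coeff f k = (deriv ^^ k) f 0 / of_nat (fact k)"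

definition H2 :: "(complex \<Rightarrow> complex) set" where
  "H2 = {g. g holomorphic_on ball 0 1 \<and> summable (\<lambda>k. (cmod (taylor_coeff g k))\<^sup>2)}"

definition H2_norm_sq :: "(complex \<Rightarrow> complex) \<Rightarrow> real" where
  "H2_norm_sq g = (\<Sum>k. (cmod (taylor_coeff g k))\<^sup>2)"

text \<open>Local Dirichlet integral D_zeta(f): the squared H^2 norm of g when f = a + (z - zeta) g on the
  disk with g in H^2 (g is unique for zeta in the closed disk); infinity if no such
  representation exists (INF of the empty set in ennreal is top).\<close>
definition local_dirichlet :: "complex \<Rightarrow> (complex \<Rightarrow> complex) \<Rightarrow> ennreal" where
  "local_dirichlet \<zeta> f =
     (INF g \<in> {g. g \<in> H2 \<and> (\<exists>a. \<forall>z\<in>ball 0 1. f z = a + (z - \<zeta>) * g z)}. ennreal (H2_norm_sq g))"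

end

(*
  Write f = a + (z - \<zeta>) g with g in H^2 and let b_k be the Taylor coefficients of g.
  Summation by parts gives f - p_n = c_n + (z - \<zeta>) h_n, where the k-th coefficient of
  h_n is (1 - w_{n,k}) b_k minus q_k = \<Sum>_{j=k..n} (w_{n,j+1} - w_{n,j}) b_j \<zeta>^(j-k).
  Since |\<zeta>| \<le> 1 and |w_{n,j+1} - w_{n,j}| \<le> L/n, every |q_k| is at most (L/n) \<Sum>_{j\<le>n} |b_j|,
  and q_k = 0 for k > n. Hence
    D_\<zeta>(f - p_n) \<le> 2 \<Sum>_k |1 - w_{n,k}|^2 |b_k|^2 + 4 L^2 (\<Sum>_{k\<le>n} |b_k|)^2 / n.
  The first term is at most 2 (1 + M)^2 ||g||^2 and tends to 0 by dominated convergence;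
  the second is at most 8 L^2 ||g||^2 by Cauchy-Schwarz and tends to 0 because
  (\<Sum>_{k\<le>n} |b_k|)^2 = o(n) for square-summable b. Minimising over the representations
  of f gives the bound with C^2 = 2 (1 + M)^2 + 8 L^2.
*)
theory Submission
  imports Defs "HOL-Complex_Analysis.Laurent_Convergence"
begin

lemma taylor_coeff_eq_fps_nth:
  assumes "f has_fps_expansion F"
  shows "taylor_coeff f k = fps_nth F k"
  unfolding taylor_coeff_def using fps_nth_fps_expansion[OF assms, of k] by simp

lemma taylor_coeff_affine_times:
  assumes g: "g holomorphic_on ball 0 1" and f: "\<forall>z\<in>ball 0 1. f z = a + (z - \<zeta>) * g z"
  shows "taylor_coeff f k =
    (if k = 0 then a - \<zeta> * taylor_coeff g 0 else taylor_coeff g (k - 1) - \<zeta> * taylor_coeff g k)"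
proof -
  have G: "g has_fps_expansion fps_expansion g 0"
    using g by (intro has_fps_expansion_fps_expansion) auto
  have "eventually (\<lambda>z. f z = a + (z - \<zeta>) * g z) (nhds 0)"
    using eventually_nhds_in_open[of "ball 0 1" 0] f by (auto elim!: eventually_mono)
  moreover have "(\<lambda>z. a + (z - \<zeta>) * g z) has_fps_expansion
      fps_const a + (fps_X - fps_const \<zeta>) * fps_expansion g 0"
    by (intro fps_expansion_intros G)
  ultimately have "f has_fps_expansion fps_const a + (fps_X - fps_const \<zeta>) * fps_expansion g 0"
    by (simp add: has_fps_expansion_cong)
  from taylor_coeff_eq_fps_nth[OF this] show ?thesis
    by (simp add: taylor_coeff_eq_fps_nth[OF G] algebra_simps)
qed

lemma taylor_coeff_diff_poly:
  assumes "g holomorphic_on ball 0 1"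
  shows "taylor_coeff (\<lambda>z. g z - (\<Sum>j\<le>n. d j * z ^ j)) k
    = taylor_coeff g k - (if k \<le> n then d k else 0)"
proof -
  have G: "g has_fps_expansion fps_expansion g 0"
    using assms by (intro has_fps_expansion_fps_expansion) auto
  have "(\<lambda>z. g z - (\<Sum>j\<le>n. d j * z ^ j)) has_fps_expansion
      fps_expansion g 0 - (\<Sum>j\<le>n. fps_const (d j) * fps_X ^ j)"
    by (intro has_fps_expansion_diff has_fps_expansion_sum has_fps_expansion_cmult_left
        has_fps_expansion_fps_X_power G)
  from taylor_coeff_eq_fps_nth[OF this] show ?thesis
    by (simp add: taylor_coeff_eq_fps_nth[OF G] fps_sum_nth if_distrib[of "\<lambda>x. _ * x"] cong: if_cong)
qed

lemma H2_diff_poly: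
  assumes "g \<in> H2"
  shows "(\<lambda>z. g z - (\<Sum>j\<le>n. d j * z ^ j)) \<in> H2"
proof -
  have g: "g holomorphic_on ball 0 1" "summable (\<lambda>k. (cmod (taylor_coeff g k))\<^sup>2)"
    using assms by (auto simp: H2_def)
  have "eventually (\<lambda>k. (cmod (taylor_coeff (\<lambda>z. g z - (\<Sum>j\<le>n. d j * z ^ j)) k))\<^sup>2
      = (cmod (taylor_coeff g k))\<^sup>2) sequentially"
    using eventually_gt_at_top[of n]
    by eventually_elim (simp only: taylor_coeff_diff_poly[OF g(1)] not_le[symmetric] if_False diff_zero)
  from summable_cong[OF this] show ?thesis
    using g by (auto simp: H2_def intro!: holomorphic_intros)
qed

lemma sum_by_parts_shifted_coeffs:
  fixes W b :: "nat \<Rightarrow> 'a::comm_ring_1"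
  shows "(\<Sum>k\<le>n. W k * (if k = 0 then a - \<zeta> * b 0 else b (k - 1) - \<zeta> * b k) * z ^ k)
     = W 0 * a + (z - \<zeta>) * (\<Sum>k\<le>n. W k * b k * z ^ k)
       + (\<Sum>k\<le>n. (W (Suc k) - W k) * b k * z ^ Suc k) - W (Suc n) * b n * z ^ Suc n"
  by (induction n) (simp_all add: algebra_simps)

lemma sum_power_Suc_diff:
  fixes d :: "nat \<Rightarrow> 'a::comm_ring_1"
  shows "(\<Sum>k\<le>n. d k * z ^ Suc k) - (\<Sum>k\<le>n. d k * \<zeta> ^ Suc k)
    = (z - \<zeta>) * (\<Sum>j\<le>n. (\<Sum>k\<le>n. d k * (if j \<le> k then \<zeta> ^ (k - j) else 0)) * z ^ j)"
proof -
  have geom: "(\<Sum>i<Suc k. \<zeta> ^ (k - i) * z ^ i)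
      = (\<Sum>j\<le>n. (if j \<le> k then \<zeta> ^ (k - j) else 0) * z ^ j)" if "k \<le> n" for k
  proof -
    have "{..n} \<inter> {j. j \<le> k} = {..<Suc k}" using that by auto
    then show ?thesis by (simp add: if_distrib[of "\<lambda>x. x * _"] sum.If_cases)
  qed
  have "z ^ Suc k - \<zeta> ^ Suc k = (z - \<zeta>) * (\<Sum>i<Suc k. \<zeta> ^ (k - i) * z ^ i)" for k
    using power_diff_sumr2[of z "Suc k" \<zeta>] by simp
  then have "(\<Sum>k\<le>n. d k * z ^ Suc k) - (\<Sum>k\<le>n. d k * \<zeta> ^ Suc k)
      = (\<Sum>k\<le>n. d k * ((z - \<zeta>) * (\<Sum>i<Suc k. \<zeta> ^ (k - i) * z ^ i)))"
    by (simp only: sum_subtractf[symmetric] right_diff_distrib[symmetric])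
  also have "\<dots> = (z - \<zeta>) * (\<Sum>k\<le>n. d k * (\<Sum>i<Suc k. \<zeta> ^ (k - i) * z ^ i))"
    by (simp add: sum_distrib_left mult_ac)
  also have "\<dots> = (z - \<zeta>) * (\<Sum>k\<le>n. \<Sum>j\<le>n. d k * ((if j \<le> k then \<zeta> ^ (k - j) else 0) * z ^ j))"
    by (intro arg_cong[where f = "\<lambda>s. (z - \<zeta>) * s"] sum.cong)
      (simp_all add: geom sum_distrib_left[symmetric] del: sum.lessThan_Suc)
  also have "\<dots> = (z - \<zeta>) * (\<Sum>j\<le>n. (\<Sum>k\<le>n. d k * (if j \<le> k then \<zeta> ^ (k - j) else 0)) * z ^ j)"
    by (subst sum.swap) (simp add: sum_distrib_right mult.assoc)
  finally show ?thesis .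
qed

lemma sub_weighted_sum_decomposition:
  fixes W :: "nat \<Rightarrow> complex"
  assumes g: "g holomorphic_on ball 0 1" and f: "\<forall>z\<in>ball 0 1. f z = a + (z - \<zeta>) * g z"
    and W: "\<And>k. k > n \<Longrightarrow> W k = 0" and z: "z \<in> ball 0 1"
  defines "d \<equiv> \<lambda>k. (W (Suc k) - W k) * taylor_coeff g k"
  defines "q \<equiv> \<lambda>j. \<Sum>k\<le>n. d k * (if j \<le> k then \<zeta> ^ (k - j) else 0)"
  shows "f z - (\<Sum>k\<le>n. W k * taylor_coeff f k * z ^ k)
    = (1 - W 0) * a - (\<Sum>k\<le>n. d k * \<zeta> ^ Suc k)
      + (z - \<zeta>) * (g z - (\<Sum>j\<le>n. (W j * taylor_coeff g j + q j) * z ^ j))"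
proof -
  have by_parts: "(\<Sum>k\<le>n. W k * taylor_coeff f k * z ^ k)
      = W 0 * a + (z - \<zeta>) * (\<Sum>k\<le>n. W k * taylor_coeff g k * z ^ k) + (\<Sum>k\<le>n. d k * z ^ Suc k)"
    using sum_by_parts_shifted_coeffs[where b = "taylor_coeff g"] W[of "Suc n"]
    by (simp only: taylor_coeff_affine_times[OF g f] d_def lessI mult_zero_left diff_zero)
  have quotient: "(\<Sum>k\<le>n. d k * z ^ Suc k)
      = (\<Sum>k\<le>n. d k * \<zeta> ^ Suc k) + (z - \<zeta>) * (\<Sum>j\<le>n. q j * z ^ j)"
    using sum_power_Suc_diff[where d = d] unfolding q_def by (simp only: diff_eq_eq add.commute)
  have split: "(\<Sum>j\<le>n. (W j * taylor_coeff g j + q j) * z ^ j)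
      = (\<Sum>j\<le>n. W j * taylor_coeff g j * z ^ j) + (\<Sum>j\<le>n. q j * z ^ j)"
    by (simp only: distrib_right sum.distrib)
  show ?thesis
    unfolding by_parts quotient split f[rule_format, OF z] by (simp add: algebra_simps)
qed

lemma norm_tail_sum_le:
  fixes d :: "nat \<Rightarrow> 'a::real_normed_div_algebra"
  assumes "norm \<zeta> \<le> 1"
  shows "norm (\<Sum>k\<le>n. d k * (if j \<le> k then \<zeta> ^ (k - j) else 0)) \<le> (\<Sum>k\<le>n. norm (d k))"
proof -
  have "norm (if j \<le> k then \<zeta> ^ (k - j) else 0) \<le> 1" for k
    using assms by (simp add: norm_power power_le_one)
  then have "norm (d k * (if j \<le> k then \<zeta> ^ (k - j) else 0)) \<le> norm (d k)" for k
    unfolding norm_mult by (simp add: mult_left_le)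
  then have "(\<Sum>k\<le>n. norm (d k * (if j \<le> k then \<zeta> ^ (k - j) else 0))) \<le> (\<Sum>k\<le>n. norm (d k))"
    by (rule sum_mono)
  with norm_sum show ?thesis
    by (rule order_trans)
qed

lemma norm_diff_sq_le: "(norm (x - y))\<^sup>2 \<le> 2 * (norm x)\<^sup>2 + 2 * (norm y)\<^sup>2"
proof -
  have "(norm (x - y))\<^sup>2 \<le> (norm x + norm y)\<^sup>2"
    by (intro power_mono norm_triangle_ineq4) simp
  also have "\<dots> \<le> 2 * (norm x)\<^sup>2 + 2 * (norm y)\<^sup>2"
    using sum_squares_bound[of "norm x" "norm y"] by (simp add: power2_sum)
  finally show ?thesis .
qed

lemma suminf_norm_diff_sq_le:
  fixes u v :: "nat \<Rightarrow> 'a::real_normed_vector"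
  assumes u: "summable (\<lambda>j. (norm (u j))\<^sup>2)" and v: "\<And>j. j > n \<Longrightarrow> v j = 0"
  shows "(\<Sum>j. (norm (u j - v j))\<^sup>2) \<le> 2 * (\<Sum>j. (norm (u j))\<^sup>2) + 2 * (\<Sum>j\<le>n. (norm (v j))\<^sup>2)"
proof -
  have v_sum: "(\<lambda>j. (norm (v j))\<^sup>2) sums (\<Sum>j\<le>n. (norm (v j))\<^sup>2)"
    using v by (intro sums_finite) auto
  have "eventually (\<lambda>j. (norm (u j - v j))\<^sup>2 = (norm (u j))\<^sup>2) sequentially"
    using eventually_gt_at_top[of n] by eventually_elim (simp add: v)
  from summable_cong[OF this] u have "summable (\<lambda>j. (norm (u j - v j))\<^sup>2)"
    by simp
  moreover have "(\<lambda>j. 2 * (norm (u j))\<^sup>2 + 2 * (norm (v j))\<^sup>2)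
      sums (2 * (\<Sum>j. (norm (u j))\<^sup>2) + 2 * (\<Sum>j\<le>n. (norm (v j))\<^sup>2))"
    using u v_sum by (intro sums_add sums_mult summable_sums)
  ultimately show ?thesis
    using norm_diff_sq_le by (intro sums_le[OF _ summable_sums]) auto
qed

lemma norm_mult_sq_le:
  fixes u b :: "'a::real_normed_div_algebra"
  assumes "norm u \<le> M"
  shows "(norm (u * b))\<^sup>2 \<le> M\<^sup>2 * (norm b)\<^sup>2"
proof -
  have "(norm u)\<^sup>2 \<le> M\<^sup>2"
    using assms by (intro power_mono) auto
  then show ?thesis
    unfolding norm_mult power_mult_distrib by (rule mult_right_mono) simp
qed

lemma suminf_norm_mult_sq_le:
  fixes u b :: "nat \<Rightarrow> 'a::real_normed_div_algebra"
  assumes b: "summable (\<lambda>j. (norm (b j))\<^sup>2)" and u: "\<And>j. norm (u j) \<le> M"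
  shows "(\<Sum>j. (norm (u j * b j))\<^sup>2) \<le> M\<^sup>2 * (\<Sum>j. (norm (b j))\<^sup>2)"
proof -
  have le: "(norm (u j * b j))\<^sup>2 \<le> M\<^sup>2 * (norm (b j))\<^sup>2" for j
    using u by (rule norm_mult_sq_le)
  have bM: "summable (\<lambda>j. M\<^sup>2 * (norm (b j))\<^sup>2)"
    using b by (rule summable_mult)
  then have "summable (\<lambda>j. (norm (u j * b j))\<^sup>2)"
    by (rule summable_comparison_test[rotated]) (use le in auto)
  with bM le have "(\<Sum>j. (norm (u j * b j))\<^sup>2) \<le> (\<Sum>j. M\<^sup>2 * (norm (b j))\<^sup>2)"
    by (intro suminf_le) auto
  also have "\<dots> = M\<^sup>2 * (\<Sum>j. (norm (b j))\<^sup>2)"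
    using b by (rule suminf_mult)
  finally show ?thesis .
qed

lemma sq_sum_atMost_le:
  fixes x :: "nat \<Rightarrow> real"
  assumes "summable (\<lambda>k. (x k)\<^sup>2)"
  shows "(\<Sum>k\<le>n. x k)\<^sup>2 \<le> (real n + 1) * (\<Sum>k. (x k)\<^sup>2)"
proof -
  have "(\<Sum>k\<le>n. 1 * x k)\<^sup>2 \<le> (\<Sum>k\<le>n. 1\<^sup>2) * (\<Sum>k\<le>n. (x k)\<^sup>2)"
    by (rule Cauchy_Schwarz_ineq_sum)
  also have "\<dots> \<le> (real n + 1) * (\<Sum>k. (x k)\<^sup>2)"
    using sum_le_suminf[OF assms, of "{..n}"] by (simp add: add.commute mult_left_mono)
  finally show ?thesis
    by simp
qed

lemma sq_sum_atMost_le_split: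
  fixes x :: "nat \<Rightarrow> real"
  shows "(\<Sum>k\<le>n. x k)\<^sup>2 \<le> 2 * (\<Sum>k<N. \<bar>x k\<bar>)\<^sup>2 + 2 * (real n + 1) * (\<Sum>k=N..n. (x k)\<^sup>2)"
proof -
  define u where "u = (\<Sum>k\<in>{..n} \<inter> {..<N}. x k)"
  define v where "v = (\<Sum>k=N..n. x k)"
  have "{..n} - {..<N} = {N..n}"
    by auto
  then have sum: "(\<Sum>k\<le>n. x k) = u + v"
    using sum.Int_Diff[of "{..n}" x "{..<N}"] by (simp add: u_def v_def)
  have "\<bar>u\<bar> \<le> (\<Sum>k\<in>{..n} \<inter> {..<N}. \<bar>x k\<bar>)"
    unfolding u_def by (rule sum_abs)
  also have "\<dots> \<le> (\<Sum>k<N. \<bar>x k\<bar>)"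
    by (intro sum_mono2) auto
  finally have "\<bar>u\<bar>\<^sup>2 \<le> (\<Sum>k<N. \<bar>x k\<bar>)\<^sup>2"
    by (intro power_mono) auto
  then have u: "u\<^sup>2 \<le> (\<Sum>k<N. \<bar>x k\<bar>)\<^sup>2"
    by simp
  have "v\<^sup>2 \<le> (\<Sum>k=N..n. 1\<^sup>2) * (\<Sum>k=N..n. (x k)\<^sup>2)"
    using Cauchy_Schwarz_ineq_sum[of "\<lambda>_. 1" x "{N..n}"] by (simp add: v_def)
  also have "\<dots> \<le> (real n + 1) * (\<Sum>k=N..n. (x k)\<^sup>2)"
    by (intro mult_right_mono sum_nonneg) auto
  finally have v: "v\<^sup>2 \<le> (real n + 1) * (\<Sum>k=N..n. (x k)\<^sup>2)" .
  have "(u + v)\<^sup>2 \<le> 2 * u\<^sup>2 + 2 * v\<^sup>2"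
    using sum_squares_bound[of u v] by (simp add: power2_sum)
  with u v show ?thesis
    unfolding sum by linarith
qed

lemma sq_sum_atMost_div_tendsto_zero:
  fixes x :: "nat \<Rightarrow> real"
  assumes "summable (\<lambda>k. (x k)\<^sup>2)"
  shows "(\<lambda>n. (\<Sum>k\<le>n. x k)\<^sup>2 / real n) \<longlonglongrightarrow> 0"
proof (rule LIMSEQ_I)
  fix r :: real
  assume r: "0 < r"
  obtain N where N0: "\<And>m n. m \<ge> N \<Longrightarrow> norm (\<Sum>k=m..n. (x k)\<^sup>2) < r / 8"
    using summable_partial_sum_bound[OF assms, of "r / 8"] r by auto
  have N: "(\<Sum>k=N..n. (x k)\<^sup>2) < r / 8" for n
    using N0[of N n] by (simp add: sum_nonneg)
  define A where "A = (\<Sum>k<N. \<bar>x k\<bar>)"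
  have "norm ((\<Sum>k\<le>n. x k)\<^sup>2 / real n - 0) < r" if n: "n \<ge> nat \<lceil>8 * A\<^sup>2 / r\<rceil> + 1" for n
  proof -
    have n1: "1 \<le> real n"
      using n by simp
    have "8 * A\<^sup>2 / r < real n"
      using n by linarith
    then have A: "8 * A\<^sup>2 < r * real n"
      using r by (simp add: field_simps)
    have "2 * (real n + 1) * (\<Sum>k=N..n. (x k)\<^sup>2) \<le> 2 * (real n + 1) * (r / 8)"
      using N[of n] by (intro mult_left_mono) auto
    moreover have "2 * (real n + 1) * (r / 8) = r * real n / 4 + r / 4"
      by (simp add: field_simps)
    ultimately have "(\<Sum>k\<le>n. x k)\<^sup>2 \<le> 2 * A\<^sup>2 + r * real n / 4 + r / 4"
      using sq_sum_atMost_le_split[of x n N] unfolding A_def by linarith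
    also have "\<dots> < r * real n"
    proof -
      have "r \<le> r * real n"
        using mult_left_mono[OF n1, of r] r by simp
      with A r show ?thesis
        by linarith
    qed
    finally show ?thesis
      using n1 by (simp add: divide_less_eq mult.commute)
  qed
  then show "\<exists>n0. \<forall>n\<ge>n0. norm ((\<Sum>k\<le>n. x k)\<^sup>2 / real n - 0) < r"
    by blast
qed

lemma tendsto_suminf_norm_mult_sq_zero:
  fixes u :: "nat \<Rightarrow> nat \<Rightarrow> 'a::real_normed_div_algebra" and b :: "nat \<Rightarrow> 'a"
  assumes u: "\<And>k. (\<lambda>n. u n k) \<longlonglongrightarrow> 0" and bound: "\<And>n k. norm (u n k) \<le> M"
    and b: "summable (\<lambda>k. (norm (b k))\<^sup>2)"
  shows "(\<lambda>n. \<Sum>k. (norm (u n k * b k))\<^sup>2) \<longlonglongrightarrow> 0"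
proof -
  have lim: "(\<lambda>n. (norm (u n k * b k))\<^sup>2) \<longlonglongrightarrow> 0" for k
  proof -
    have "(\<lambda>n. (norm (u n k) * norm (b k))\<^sup>2) \<longlonglongrightarrow> (0 * norm (b k))\<^sup>2"
      using u[of k] by (intro tendsto_intros) (simp add: tendsto_norm_zero)
    then show ?thesis
      by (simp add: norm_mult)
  qed
  have "eventually (\<lambda>(k, n). norm ((norm (u n k * b k))\<^sup>2) \<le> M\<^sup>2 * (norm (b k))\<^sup>2)
      (at_top \<times>\<^sub>F sequentially)"
    using norm_mult_sq_le[OF bound] by (intro always_eventually) auto
  moreover have "summable (\<lambda>k. M\<^sup>2 * (norm (b k))\<^sup>2)"
    using b by (rule summable_mult)
  ultimately have "(\<lambda>n. \<Sum>k. (norm (u n k * b k))\<^sup>2) \<longlonglongrightarrow> (\<Sum>k. 0)"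
    using tannerys_theorem[where a = "\<lambda>k n. (norm (u n k * b k))\<^sup>2" and b = "\<lambda>_. 0"
        and F = sequentially, OF lim] by auto
  then show ?thesis
    by simp
qed

lemma local_dirichlet_le_H2_norm_sq:
  assumes "h \<in> H2" and "\<forall>z\<in>ball 0 1. f z = c + (z - \<zeta>) * h z"
  shows "local_dirichlet \<zeta> f \<le> ennreal (H2_norm_sq h)"
  unfolding local_dirichlet_def by (rule INF_lower) (use assms in blast)

lemma local_dirichlet_finiteE:
  assumes "local_dirichlet \<zeta> f < \<infinity>"
  obtains g a where "g \<in> H2" and "\<forall>z\<in>ball 0 1. f z = a + (z - \<zeta>) * g z"
proof -
  have "{g. g \<in> H2 \<and> (\<exists>a. \<forall>z\<in>ball 0 1. f z = a + (z - \<zeta>) * g z)} \<noteq> {}"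
    using assms unfolding local_dirichlet_def by (metis INF_empty less_irrefl infinity_ennreal_def)
  with that show ?thesis
    by blast
qed

lemma le_mult_local_dirichlet:
  assumes fin: "local_dirichlet \<zeta> f < \<infinity>" and K: "K \<ge> 0"
    and bound: "\<And>g a. g \<in> H2 \<Longrightarrow> \<forall>z\<in>ball 0 1. f z = a + (z - \<zeta>) * g z
      \<Longrightarrow> x \<le> ennreal K * ennreal (H2_norm_sq g)"
  shows "x \<le> ennreal K * local_dirichlet \<zeta> f"
proof -
  define X where "X = (\<lambda>g. ennreal (H2_norm_sq g)) `
    {g. g \<in> H2 \<and> (\<exists>a. \<forall>z\<in>ball 0 1. f z = a + (z - \<zeta>) * g z)}"
  have X: "local_dirichlet \<zeta> f = Inf X"
    unfolding local_dirichlet_def X_def ..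
  have "X \<noteq> {}"
    using fin X by auto
  moreover have "continuous (at_right (Inf X)) (\<lambda>y. ennreal K * y)"
    using ennreal_continuous_on_cmult[OF _ continuous_on_id, of "ennreal K" UNIV]
    by (auto simp: continuous_on_eq_continuous_within intro: continuous_within_subset)
  ultimately have "ennreal K * Inf X = (INF y\<in>X. ennreal K * y)"
    by (intro continuous_at_Inf_mono) (auto simp: mono_def mult_left_mono)
  also have "x \<le> \<dots>"
    using bound by (auto simp: X_def intro!: INF_greatest)
  finally show ?thesis
    unfolding X .
qed

lemma local_dirichlet_sub_weighted_sum_le:
  fixes W :: "nat \<Rightarrow> complex" and E :: real
  assumes g: "g \<in> H2" and f: "\<forall>z\<in>ball 0 1. f z = a + (z - \<zeta>) * g z"
    and W: "\<And>k. k > n \<Longrightarrow> W k = 0" and E: "\<And>k. cmod (W k - W (Suc k)) \<le> E"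
    and \<zeta>: "cmod \<zeta> \<le> 1"
  shows "local_dirichlet \<zeta> (\<lambda>z. f z - (\<Sum>k\<le>n. W k * taylor_coeff f k * z ^ k))
    \<le> ennreal (2 * (\<Sum>j. (cmod ((1 - W j) * taylor_coeff g j))\<^sup>2)
        + 2 * (real n + 1) * (E * (\<Sum>k\<le>n. cmod (taylor_coeff g k)))\<^sup>2)"
proof -
  have g_hol: "g holomorphic_on ball 0 1" and b: "summable (\<lambda>j. (cmod (taylor_coeff g j))\<^sup>2)"
    using g by (auto simp: H2_def)
  define d where "d \<equiv> \<lambda>k. (W (Suc k) - W k) * taylor_coeff g k"
  define q where "q \<equiv> \<lambda>j. \<Sum>k\<le>n. d k * (if j \<le> k then \<zeta> ^ (k - j) else 0)"
  define h where "h \<equiv> \<lambda>z. g z - (\<Sum>j\<le>n. (W j * taylor_coeff g j + q j) * z ^ j)"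
  have q0: "q j = 0" if "j > n" for j
    unfolding q_def using that by (intro sum.neutral) auto
  have q_le: "cmod (q j) \<le> E * (\<Sum>k\<le>n. cmod (taylor_coeff g k))" for j
  proof -
    have "cmod (d k) \<le> E * cmod (taylor_coeff g k)" for k
      using E[of k] unfolding d_def norm_mult by (simp add: norm_minus_commute mult_right_mono)
    then have "(\<Sum>k\<le>n. cmod (d k)) \<le> E * (\<Sum>k\<le>n. cmod (taylor_coeff g k))"
      by (simp add: sum_distrib_left sum_mono)
    with norm_tail_sum_le[OF \<zeta>] show ?thesis
      unfolding q_def by (rule order_trans)
  qed
  have coeff: "taylor_coeff h j = (1 - W j) * taylor_coeff g j - q j" for j
    unfolding h_def taylor_coeff_diff_poly[OF g_hol] using W[of j] q0[of j] by (auto simp: algebra_simps)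
  have "eventually (\<lambda>j. (cmod ((1 - W j) * taylor_coeff g j))\<^sup>2 = (cmod (taylor_coeff g j))\<^sup>2) sequentially"
    using eventually_gt_at_top[of n] by eventually_elim (simp add: W)
  from summable_cong[OF this] b have Wb: "summable (\<lambda>j. (cmod ((1 - W j) * taylor_coeff g j))\<^sup>2)"
    by simp
  have "H2_norm_sq h \<le> 2 * (\<Sum>j. (cmod ((1 - W j) * taylor_coeff g j))\<^sup>2) + 2 * (\<Sum>j\<le>n. (cmod (q j))\<^sup>2)"
    unfolding H2_norm_sq_def coeff using Wb q0 by (rule suminf_norm_diff_sq_le)
  also have "(\<Sum>j\<le>n. (cmod (q j))\<^sup>2) \<le> (real n + 1) * (E * (\<Sum>k\<le>n. cmod (taylor_coeff g k)))\<^sup>2"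
  proof -
    have "(cmod (q j))\<^sup>2 \<le> (E * (\<Sum>k\<le>n. cmod (taylor_coeff g k)))\<^sup>2" for j
      using q_le[of j] by (intro power_mono) auto
    then show ?thesis
      using sum_bounded_above[of "{..n}" "\<lambda>j. (cmod (q j))\<^sup>2"] by (simp add: add.commute)
  qed
  finally have "H2_norm_sq h \<le> 2 * (\<Sum>j. (cmod ((1 - W j) * taylor_coeff g j))\<^sup>2)
      + 2 * (real n + 1) * (E * (\<Sum>k\<le>n. cmod (taylor_coeff g k)))\<^sup>2"
    by (simp only: mult.assoc)
  moreover have "local_dirichlet \<zeta> (\<lambda>z. f z - (\<Sum>k\<le>n. W k * taylor_coeff f k * z ^ k)) \<le> ennreal (H2_norm_sq h)"
    using sub_weighted_sum_decomposition[OF g_hol f W] H2_diff_poly[OF g]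
    unfolding h_def d_def q_def by (intro local_dirichlet_le_H2_norm_sq) auto
  ultimately show ?thesis
    using ennreal_leI order_trans by blast
qed

definition dirichlet_error_bound ::
    "(nat \<Rightarrow> nat \<Rightarrow> complex) \<Rightarrow> real \<Rightarrow> (complex \<Rightarrow> complex) \<Rightarrow> nat \<Rightarrow> real" where
  "dirichlet_error_bound w L g n =
     2 * (\<Sum>j. (cmod ((1 - w n j) * taylor_coeff g j))\<^sup>2)
     + 4 * L\<^sup>2 * ((\<Sum>k\<le>n. cmod (taylor_coeff g k))\<^sup>2 / real n)"

lemma local_dirichlet_sub_weighted_sum_le_error_bound:
  fixes w :: "nat \<Rightarrow> nat \<Rightarrow> complex"
  assumes w: "\<And>k. k > n \<Longrightarrow> w n k = 0" and L: "\<And>k. cmod (w n k - w n (Suc k)) \<le> L / real n"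
    and g: "g \<in> H2" and f: "\<forall>z\<in>ball 0 1. f z = a + (z - \<zeta>) * g z"
    and \<zeta>: "cmod \<zeta> \<le> 1" and n: "n \<ge> 1"
  shows "local_dirichlet \<zeta> (\<lambda>z. f z - (\<Sum>k\<le>n. w n k * taylor_coeff f k * z ^ k))
    \<le> ennreal (dirichlet_error_bound w L g n)"
proof -
  define B where "B = (\<Sum>k\<le>n. cmod (taylor_coeff g k))"
  have "2 * (real n + 1) * (L / real n * B)\<^sup>2 = 2 * ((real n + 1) / real n) * (L\<^sup>2 * (B\<^sup>2 / real n))"
    using n by (simp add: power2_eq_square field_simps)
  also have "\<dots> \<le> 2 * 2 * (L\<^sup>2 * (B\<^sup>2 / real n))"
    using n by (intro mult_right_mono mult_left_mono) (auto simp: field_simps)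
  finally have "2 * (real n + 1) * (L / real n * B)\<^sup>2 \<le> 4 * L\<^sup>2 * (B\<^sup>2 / real n)"
    by simp
  then have "2 * (\<Sum>j. (cmod ((1 - w n j) * taylor_coeff g j))\<^sup>2) + 2 * (real n + 1) * (L / real n * B)\<^sup>2
      \<le> dirichlet_error_bound w L g n"
    unfolding dirichlet_error_bound_def B_def by simp
  with local_dirichlet_sub_weighted_sum_le[where W = "w n" and n = n, OF g f w L \<zeta>] show ?thesis
    unfolding B_def by (blast intro: order_trans ennreal_leI)
qed

lemma dirichlet_error_bound_le:
  fixes w :: "nat \<Rightarrow> nat \<Rightarrow> complex"
  assumes M: "\<And>k. cmod (w n k) \<le> M" and g: "g \<in> H2" and n: "n \<ge> 1"
  shows "dirichlet_error_bound w L g n \<le> (2 * (1 + M)\<^sup>2 + 8 * L\<^sup>2) * H2_norm_sq g"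
proof -
  have b: "summable (\<lambda>k. (cmod (taylor_coeff g k))\<^sup>2)"
    using g by (simp add: H2_def)
  have "cmod (1 - w n j) \<le> 1 + M" for j
    using norm_triangle_ineq4[of 1 "w n j"] M[of j] by simp
  then have head: "(\<Sum>j. (cmod ((1 - w n j) * taylor_coeff g j))\<^sup>2) \<le> (1 + M)\<^sup>2 * H2_norm_sq g"
    unfolding H2_norm_sq_def using b by (intro suminf_norm_mult_sq_le)
  have "(\<Sum>k\<le>n. cmod (taylor_coeff g k))\<^sup>2 \<le> (real n + 1) * H2_norm_sq g"
    unfolding H2_norm_sq_def using b by (intro sq_sum_atMost_le) simp
  also have "\<dots> \<le> 2 * real n * H2_norm_sq g"
    using n b by (intro mult_right_mono) (auto simp: H2_norm_sq_def intro: suminf_nonneg)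
  finally have "(\<Sum>k\<le>n. cmod (taylor_coeff g k))\<^sup>2 / real n \<le> 2 * H2_norm_sq g"
    using n by (simp add: divide_le_eq mult_ac)
  then have "4 * L\<^sup>2 * ((\<Sum>k\<le>n. cmod (taylor_coeff g k))\<^sup>2 / real n) \<le> 4 * L\<^sup>2 * (2 * H2_norm_sq g)"
    by (intro mult_left_mono) auto
  with head show ?thesis
    unfolding dirichlet_error_bound_def by (simp add: algebra_simps)
qed

lemma dirichlet_error_bound_tendsto_zero:
  fixes w :: "nat \<Rightarrow> nat \<Rightarrow> complex"
  assumes lim: "\<And>k. (\<lambda>n. w n k) \<longlonglongrightarrow> 1" and M: "\<And>n k. cmod (w n k) \<le> M" and g: "g \<in> H2"
  shows "dirichlet_error_bound w L g \<longlonglongrightarrow> 0"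
proof -
  have b: "summable (\<lambda>k. (cmod (taylor_coeff g k))\<^sup>2)"
    using g by (simp add: H2_def)
  have "(\<lambda>n. 1 - w n k) \<longlonglongrightarrow> 0" for k
    using tendsto_diff[OF tendsto_const lim[of k], of 1] by simp
  moreover have "cmod (1 - w n k) \<le> 1 + M" for n k
    using norm_triangle_ineq4[of 1 "w n k"] M[of n k] by simp
  ultimately have "(\<lambda>n. \<Sum>j. (cmod ((1 - w n j) * taylor_coeff g j))\<^sup>2) \<longlonglongrightarrow> 0"
    using b by (rule tendsto_suminf_norm_mult_sq_zero)
  moreover have "(\<lambda>n. (\<Sum>k\<le>n. cmod (taylor_coeff g k))\<^sup>2 / real n) \<longlonglongrightarrow> 0"
    using b by (intro sq_sum_atMost_div_tendsto_zero) simp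
  ultimately have "dirichlet_error_bound w L g \<longlonglongrightarrow> 2 * 0 + 4 * L\<^sup>2 * 0"
    unfolding dirichlet_error_bound_def[abs_def] by (intro tendsto_intros)
  then show ?thesis
    by simp
qed

lemma local_dirichlet_sub_weighted_sum_tendsto_zero:
  fixes w :: "nat \<Rightarrow> nat \<Rightarrow> complex"
  assumes w: "\<And>n k. k > n \<Longrightarrow> w n k = 0" and lim: "\<And>k. (\<lambda>n. w n k) \<longlonglongrightarrow> 1"
    and M: "\<And>n k. cmod (w n k) \<le> M"
    and L: "\<And>n k. n \<ge> 1 \<Longrightarrow> cmod (w n k - w n (Suc k)) \<le> L / real n"
    and g: "g \<in> H2" and f: "\<forall>z\<in>ball 0 1. f z = a + (z - \<zeta>) * g z" and \<zeta>: "cmod \<zeta> \<le> 1"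
  shows "(\<lambda>n. local_dirichlet \<zeta> (\<lambda>z. f z - (\<Sum>k\<le>n. w n k * taylor_coeff f k * z ^ k))) \<longlonglongrightarrow> 0"
proof (rule tendsto_sandwich[of "\<lambda>_. 0" _ _ "\<lambda>n. ennreal (dirichlet_error_bound w L g n)"])
  have "local_dirichlet \<zeta> (\<lambda>z. f z - (\<Sum>k\<le>n. w n k * taylor_coeff f k * z ^ k))
      \<le> ennreal (dirichlet_error_bound w L g n)" if n: "n \<ge> 1" for n
    using w L[OF n] g f \<zeta> n by (rule local_dirichlet_sub_weighted_sum_le_error_bound)
  then show "eventually (\<lambda>n. local_dirichlet \<zeta> (\<lambda>z. f z - (\<Sum>k\<le>n. w n k * taylor_coeff f k * z ^ k))
      \<le> ennreal (dirichlet_error_bound w L g n)) sequentially"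
    by (auto simp: eventually_sequentially)
  show "(\<lambda>n. ennreal (dirichlet_error_bound w L g n)) \<longlonglongrightarrow> 0"
    using tendsto_ennrealI[OF dirichlet_error_bound_tendsto_zero[OF lim M g]] by simp
qed auto

lemma local_dirichlet_sub_weighted_sum_le_mult:
  fixes w :: "nat \<Rightarrow> nat \<Rightarrow> complex"
  assumes w: "\<And>k. k > n \<Longrightarrow> w n k = 0" and M: "\<And>k. cmod (w n k) \<le> M"
    and L: "\<And>k. cmod (w n k - w n (Suc k)) \<le> L / real n"
    and fin: "local_dirichlet \<zeta> f < \<infinity>" and \<zeta>: "cmod \<zeta> \<le> 1" and n: "n \<ge> 1"
  shows "local_dirichlet \<zeta> (\<lambda>z. f z - (\<Sum>k\<le>n. w n k * taylor_coeff f k * z ^ k))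
    \<le> ennreal (2 * (1 + M)\<^sup>2 + 8 * L\<^sup>2) * local_dirichlet \<zeta> f"
  using fin
proof (rule le_mult_local_dirichlet)
  fix g a
  assume g: "g \<in> H2" and f: "\<forall>z\<in>ball 0 1. f z = a + (z - \<zeta>) * g z"
  have "local_dirichlet \<zeta> (\<lambda>z. f z - (\<Sum>k\<le>n. w n k * taylor_coeff f k * z ^ k))
      \<le> ennreal ((2 * (1 + M)\<^sup>2 + 8 * L\<^sup>2) * H2_norm_sq g)"
    using local_dirichlet_sub_weighted_sum_le_error_bound[where w = w and n = n, OF w L g f \<zeta> n]
      dirichlet_error_bound_le[where w = w and n = n, OF M g n] by (blast intro: order_trans ennreal_leI)
  then show "local_dirichlet \<zeta> (\<lambda>z. f z - (\<Sum>k\<le>n. w n k * taylor_coeff f k * z ^ k))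
      \<le> ennreal (2 * (1 + M)\<^sup>2 + 8 * L\<^sup>2) * ennreal (H2_norm_sq g)"
    by (simp add: ennreal_mult')
qed simp

theorem mainTheorem8:
  fixes w :: "nat \<Rightarrow> nat \<Rightarrow> complex" and L M :: real
  assumes "\<And>n k. k > n \<Longrightarrow> w n k = 0"
    and "\<And>k. (\<lambda>n. w n k) \<longlonglongrightarrow> 1"
    and "\<And>n k. cmod (w n k) \<le> M"
    and "\<And>n k. n \<ge> 1 \<Longrightarrow> cmod (w n k - w n (Suc k)) \<le> L / real n"
  shows "\<exists>C::real. \<forall>(f :: complex \<Rightarrow> complex) (\<zeta> :: complex).
           f holomorphic_on ball 0 1 \<longrightarrow> cmod \<zeta> \<le> 1 \<longrightarrow> local_dirichlet \<zeta> f < \<infinity> \<longrightarrow>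
           (let p = (\<lambda>n z. \<Sum>k\<le>n. w n k * taylor_coeff f k * z ^ k) in
             ((\<lambda>n. local_dirichlet \<zeta> (\<lambda>z. f z - p n z)) \<longlonglongrightarrow> 0) \<and>
             (\<forall>n\<ge>1. local_dirichlet \<zeta> (\<lambda>z. f z - p n z) \<le> ennreal (C\<^sup>2) * local_dirichlet \<zeta> f))"
  unfolding Let_def
proof (intro exI[of _ "sqrt (2 * (1 + M)\<^sup>2 + 8 * L\<^sup>2)"] allI impI conjI)
  fix f :: "complex \<Rightarrow> complex" and \<zeta> :: complex
  assume \<zeta>: "cmod \<zeta> \<le> 1" and fin: "local_dirichlet \<zeta> f < \<infinity>"
  obtain g a where g: "g \<in> H2" and f: "\<forall>z\<in>ball 0 1. f z = a + (z - \<zeta>) * g z"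
    using fin by (rule local_dirichlet_finiteE)
  show "(\<lambda>n. local_dirichlet \<zeta> (\<lambda>z. f z - (\<Sum>k\<le>n. w n k * taylor_coeff f k * z ^ k))) \<longlonglongrightarrow> 0"
    using assms g f \<zeta> by (rule local_dirichlet_sub_weighted_sum_tendsto_zero)
  fix n :: nat
  assume n: "n \<ge> 1"
  show "local_dirichlet \<zeta> (\<lambda>z. f z - (\<Sum>k\<le>n. w n k * taylor_coeff f k * z ^ k))
      \<le> ennreal ((sqrt (2 * (1 + M)\<^sup>2 + 8 * L\<^sup>2))\<^sup>2) * local_dirichlet \<zeta> f"
    using local_dirichlet_sub_weighted_sum_le_mult[where w = w and n = n,
        OF assms(1,3) assms(4)[OF n] fin \<zeta> n]
    by simp
qed

end
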